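(* Let $d\ge1$ be an integer, $\gamma^2>0$, $\sigma^2\ge0$, and let there be $I$ client types with data sizes $D_1,\dots,D_I>0$. Let $\boldsymbol{K}=(K_1,\dots,K_I)$ be nonnegative integers with $K=\sum_i K_i\ge1$, describing a non-empty coalition with $K_i$ participants of type $i$, and set $$\eta=\frac{(2K+1)\sum_{i=1}^I K_i/D_i}{K^2}-\frac{(K+1)\sigma^2}{d\gamma^2K}.$$ Fix a type $j\in\{1,\dots,I\}$, let $\boldsymbol{e}_j$ be the $j$-th unit vector, and for $m\ge 0$ let $\Delta_m=\varepsilon(\boldsymbol{K}+m\boldsymbol{e}_j)-\varepsilon(\boldsymbol{K}+(m+1)\boldsymbol{e}_j)$ be the network effect of adding one more type-$j$ participant after $m$ type-$j$ participants have already been added. Then: (1) if $1/D_j<\sigma^2/(d\gamma^2)$ and $1/D_j\le\eta$, then $\Delta_0\ge0$ and there exists $M$ such that $\Delta_m<0$ for all $m\ge M$; (2) if $\sigma^2/(d\gamma^2)\le 1/D_j\le\eta$, then $\Delta_m\ge 0$ for all $m\ge0$; (3) if $\eta<1/D_j\le\sigma^2/(d\gamma^2)$, then $\Delta_m<0$ for all $m\ge 0$; (4) if $\max\{\sigma^2/(d\gamma^2),\eta\}<1/D_j$, then $\Delta_0<0$ and there exists $M$ such that $\Delta_m>0$ for all $m\ge M$.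
   Context: For a coalition described by nonnegative integers $\boldsymbol{K}=(K_1,\dots,K_I)$ (number of participants of each type) with $K=\sum_iK_i\ge1$, the generalization error of the federated model is defined as $\varepsilon(\boldsymbol{K})=\frac{d\gamma^2}{K^2}\sum_{i=1}^I\frac{K_i}{D_i}+\frac{K-1}{K}\sigma^2$, where $d$ is the feature dimension, $\gamma^2$ the data (target-noise) variance and $\sigma^2$ the client variance. The network effect of a new participant is the decrease in generalization error caused by adding it; "non-negative/positive" network effects correspond to $\Delta_m\ge0$/$\Delta_m>0$. The paper states the conclusions informally as "initially non-negative but eventually negative as more type-$j$ clients participate", "always non-negative", "always negative", and "initially negative but eventually positive"; the claim records these in terms of $\Delta_m$. *)

theory Defs
  imports Complex_Main
begin

text \<open>Client types are indexed by 1..I. A coalition is K :: nat => nat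
(only the values on 1..I matter). gsq = gamma^2, ssq = sigma^2.\<close>

definition total :: "nat \<Rightarrow> (nat \<Rightarrow> nat) \<Rightarrow> real" where
  "total I K = real (\<Sum>i=1..I. K i)"

definition gen_err :: "real \<Rightarrow> real \<Rightarrow> real \<Rightarrow> nat \<Rightarrow> (nat \<Rightarrow> real) \<Rightarrow> (nat \<Rightarrow> nat) \<Rightarrow> real" where
  "gen_err d gsq ssq I D K =
     d * gsq / (total I K)^2 * (\<Sum>i=1..I. real (K i) / D i)
     + (total I K - 1) / total I K * ssq"

definition eta :: "real \<Rightarrow> real \<Rightarrow> real \<Rightarrow> nat \<Rightarrow> (nat \<Rightarrow> real) \<Rightarrow> (nat \<Rightarrow> nat) \<Rightarrow> real" where
  "eta d gsq ssq I D K =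
     (2 * total I K + 1) * (\<Sum>i=1..I. real (K i) / D i) / (total I K)^2
     - (total I K + 1) * ssq / (d * gsq * total I K)"

definition net_effect :: "real \<Rightarrow> real \<Rightarrow> real \<Rightarrow> nat \<Rightarrow> (nat \<Rightarrow> real) \<Rightarrow> (nat \<Rightarrow> nat) \<Rightarrow> nat \<Rightarrow> nat \<Rightarrow> real" where
  "net_effect d gsq ssq I D K j m =
     gen_err d gsq ssq I D (K(j := K j + m)) - gen_err d gsq ssq I D (K(j := K j + m + 1))"

end

theory Submission
  imports Defs
begin

text \<open>With \<open>N = K + m\<close> clients after \<open>m\<close> extra type-\<open>j\<close> arrivals, the network effect equals
  \<open>d \<gamma>\<^sup>2 F(N) / (N\<^sup>2 (N + 1)\<^sup>2)\<close> for the quadratic \<open>F(N) = p (N\<^sup>2 + N) + b (2 N + 1)\<close> with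
  \<open>p = 1/D\<^sub>j - \<sigma>\<^sup>2/(d \<gamma>\<^sup>2)\<close> and \<open>b = \<Sum>\<^sub>i K\<^sub>i/D\<^sub>i - K/D\<^sub>j\<close>, and \<open>\<eta> - 1/D\<^sub>j = F(K)/K\<^sup>2\<close>.
  So \<open>\<Delta>\<^sub>m\<close> has the sign of \<open>F(K + m)\<close>, and the hypotheses fix the signs of \<open>p\<close> and \<open>F(K)\<close>.
  For large \<open>N\<close> the quadratic takes the sign of its leading coefficient \<open>p\<close>; and if \<open>p \<ge> 0\<close>,
  nonnegativity (or positivity) of \<open>F(K)\<close> persists on \<open>[K, \<infinity>)\<close>, symmetrically for \<open>p \<le> 0\<close>.\<close>

definition weighted_total :: "nat \<Rightarrow> (nat \<Rightarrow> real) \<Rightarrow> (nat \<Rightarrow> nat) \<Rightarrow> real" where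
  "weighted_total I D K = (\<Sum>i=1..I. real (K i) / D i)"

definition net_effect_numerator :: "real \<Rightarrow> real \<Rightarrow> real \<Rightarrow> real" where
  "net_effect_numerator p b N = p * (N\<^sup>2 + N) + b * (2 * N + 1)"

lemma net_effect_numerator_uminus:
  "net_effect_numerator (- p) (- b) N = - net_effect_numerator p b N"
  by (simp add: net_effect_numerator_def)

lemma net_effect_numerator_propagates:
  assumes "0 \<le> p" "0 < T" "T \<le> N"
  shows "0 \<le> net_effect_numerator p b T \<Longrightarrow> 0 \<le> net_effect_numerator p b N"
    and "0 < net_effect_numerator p b T \<Longrightarrow> 0 < net_effect_numerator p b N"
proof -
  let ?F = "net_effect_numerator p b"
  consider "N * ?F T \<le> T * ?F N" | "?F T \<le> ?F N"
  proof (cases "b \<le> 0")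
    case True
    have "0 \<le> p * N * T"
      using assms by simp
    have "T * ?F N - N * ?F T = (N - T) * (p * N * T - b)"
      by (simp add: net_effect_numerator_def algebra_simps power2_eq_square)
    also have "\<dots> \<ge> 0"
      using assms True \<open>0 \<le> p * N * T\<close> by (intro mult_nonneg_nonneg) linarith+
    finally show thesis using that(1) by simp
  next
    case False
    have "?F N - ?F T = p * (N\<^sup>2 - T\<^sup>2) + (p + 2 * b) * (N - T)"
      by (simp add: net_effect_numerator_def algebra_simps)
    also have "\<dots> \<ge> 0"
      using assms False by (intro add_nonneg_nonneg mult_nonneg_nonneg) (auto intro: power_mono)
    finally show thesis using that(2) by simp
  qed
  then show "0 \<le> ?F T \<Longrightarrow> 0 \<le> ?F N" and "0 < ?F T \<Longrightarrow> 0 < ?F N"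
    using assms by (cases; smt (verit) mult_pos_pos mult_nonneg_nonneg zero_le_mult_iff zero_less_mult_iff)+
qed

lemma net_effect_numerator_eventually_sgn:
  assumes "p \<noteq> 0" "0 \<le> T"
  shows "\<exists>M. \<forall>m\<ge>M. sgn (net_effect_numerator p b (T + real m)) = sgn p"
proof -
  define C where "C = \<bar>p + 2 * b\<bar> + \<bar>b\<bar>"
  obtain M :: nat where M: "max 1 (C / \<bar>p\<bar>) < real M"
    using reals_Archimedean2 by blast
  have "sgn (net_effect_numerator p b N) = sgn p" if "M \<le> N" for N :: real
  proof -
    have "C < \<bar>p\<bar> * M"
      using M assms(1) by (simp add: field_simps)
    also have "\<dots> \<le> \<bar>p\<bar> * N"
      using that by (simp add: mult_left_mono)
    finally have N: "1 \<le> N" "C < \<bar>p\<bar> * N"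
      using M that by auto
    have "\<bar>(p + 2 * b) * N + b\<bar> \<le> C * N"
      using N(1) unfolding C_def
      by (smt (verit) abs_mult abs_of_pos distrib_right mult_le_cancel_left1 abs_ge_zero mult.commute)
    also have "\<dots> < \<bar>p * N\<^sup>2\<bar>"
      using N by (simp add: abs_mult power2_eq_square)
    finally have "\<bar>net_effect_numerator p b N - p * N\<^sup>2\<bar> < \<bar>p * N\<^sup>2\<bar>"
      by (simp add: net_effect_numerator_def algebra_simps)
    then have "sgn (net_effect_numerator p b N) = sgn (p * N\<^sup>2)"
      by (smt (verit) sgn_pos sgn_neg sgn_0 abs_of_pos abs_of_neg)
    then show ?thesis
      using N(1) by (simp add: sgn_mult)
  qed
  then show ?thesis
    using assms(2) by (metis le_add_same_cancel2 of_nat_le_iff order.trans)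
qed

lemma net_effect_numerator_sign_pattern:
  fixes f :: "nat \<Rightarrow> real"
  assumes "0 < T" and sgn_f: "\<And>m. sgn (f m) = sgn (net_effect_numerator p b (T + real m))"
  shows "p < 0 \<Longrightarrow> 0 \<le> net_effect_numerator p b T \<Longrightarrow> 0 \<le> f 0 \<and> (\<exists>M. \<forall>m\<ge>M. f m < 0)"
    and "0 \<le> p \<Longrightarrow> 0 \<le> net_effect_numerator p b T \<Longrightarrow> \<forall>m. 0 \<le> f m"
    and "p \<le> 0 \<Longrightarrow> net_effect_numerator p b T < 0 \<Longrightarrow> \<forall>m. f m < 0"
    and "0 < p \<Longrightarrow> net_effect_numerator p b T < 0 \<Longrightarrow> f 0 < 0 \<and> (\<exists>M. \<forall>m\<ge>M. 0 < f m)"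
proof -
  let ?F = "net_effect_numerator p b"
  have f_iff: "0 \<le> f m \<longleftrightarrow> 0 \<le> ?F (T + real m)" "f m < 0 \<longleftrightarrow> ?F (T + real m) < 0" for m
    using sgn_f[of m] by (metis zero_le_sgn_iff sgn_less)+
  have eventually_sgn_p: "\<exists>M. \<forall>m\<ge>M. sgn (f m) = sgn p" if "p \<noteq> 0"
    using net_effect_numerator_eventually_sgn[OF that, of T b] \<open>0 < T\<close> by (simp add: sgn_f)
  have T_le: "0 < T" "T \<le> T + real m" for m
    using \<open>0 < T\<close> by simp_all
  show "p < 0 \<Longrightarrow> 0 \<le> ?F T \<Longrightarrow> 0 \<le> f 0 \<and> (\<exists>M. \<forall>m\<ge>M. f m < 0)"
    using f_iff(1)[of 0] eventually_sgn_p by (simp add: sgn_1_neg)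
  show "0 \<le> p \<Longrightarrow> 0 \<le> ?F T \<Longrightarrow> \<forall>m. 0 \<le> f m"
    using net_effect_numerator_propagates(1)[OF _ T_le] f_iff(1) by simp
  show "p \<le> 0 \<Longrightarrow> ?F T < 0 \<Longrightarrow> \<forall>m. f m < 0"
    using net_effect_numerator_propagates(2)[of "- p", OF _ T_le, of "- b"] f_iff(2)
    by (simp add: net_effect_numerator_uminus)
  show "0 < p \<Longrightarrow> ?F T < 0 \<Longrightarrow> f 0 < 0 \<and> (\<exists>M. \<forall>m\<ge>M. 0 < f m)"
    using f_iff(2)[of 0] eventually_sgn_p by (simp add: sgn_1_pos)
qed

lemma sum_fun_upd_add:
  fixes w :: "'a \<Rightarrow> real"
  assumes "finite A" "j \<in> A"
  shows "(\<Sum>i\<in>A. real ((K(j := K j + m)) i) * w i) = (\<Sum>i\<in>A. real (K i) * w i) + real m * w j"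
  using assms by (simp add: sum.remove algebra_simps)

lemma total_fun_upd_add:
  assumes "j \<in> {1..I}"
  shows "total I (K(j := K j + m)) = total I K + real m"
  using sum_fun_upd_add[OF finite_atLeastAtMost assms, of K m "\<lambda>_. 1"]
  by (simp add: total_def)

lemma weighted_total_fun_upd_add:
  assumes "j \<in> {1..I}"
  shows "weighted_total I D (K(j := K j + m)) = weighted_total I D K + real m / D j"
  using sum_fun_upd_add[OF finite_atLeastAtMost assms, of K m "\<lambda>i. 1 / D i"]
  by (simp add: weighted_total_def)

lemma gen_err_difference_eq:
  fixes c s X a N :: real
  assumes "c \<noteq> 0" "0 < N"
  shows "c / N\<^sup>2 * X + (N - 1) / N * s - (c / (N + 1)\<^sup>2 * (X + a) + (N + 1 - 1) / (N + 1) * s)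
    = c * net_effect_numerator (a - s / c) (X - a * N) N / (N\<^sup>2 * (N + 1)\<^sup>2)"
proof -
  have "N + 1 \<noteq> 0"
    using assms by simp
  then show ?thesis
    using assms unfolding net_effect_numerator_def
    by (simp add: divide_simps) (simp add: algebra_simps power2_eq_square)
qed

lemma net_effect_eq:
  fixes m :: nat
  assumes "j \<in> {1..I}" "0 < total I K" "d * gsq \<noteq> 0"
  defines "N \<equiv> total I K + real m"
  shows "net_effect d gsq ssq I D K j m
    = d * gsq * net_effect_numerator (1 / D j - ssq / (d * gsq)) (weighted_total I D K - total I K / D j) N
      / (N\<^sup>2 * (N + 1)\<^sup>2)"
proof -
  have "0 < N"
    using assms(2) by (simp add: N_def add_pos_nonneg)
  have succ: "total I (K(j := K j + m + 1)) = N + 1"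
    "weighted_total I D (K(j := K j + m + 1)) = weighted_total I D K + real m / D j + 1 / D j"
    using total_fun_upd_add[OF assms(1), of K "m + 1"] weighted_total_fun_upd_add[OF assms(1), of D K "m + 1"]
    by (simp_all add: N_def add.assoc add_divide_distrib)
  have curr: "total I (K(j := K j + m)) = N"
    "weighted_total I D (K(j := K j + m)) = weighted_total I D K + real m / D j"
    using total_fun_upd_add[OF assms(1)] weighted_total_fun_upd_add[OF assms(1)] by (simp_all add: N_def)
  have "net_effect d gsq ssq I D K j m
    = d * gsq * net_effect_numerator (1 / D j - ssq / (d * gsq))
      (weighted_total I D K + real m / D j - 1 / D j * N) N / (N\<^sup>2 * (N + 1)\<^sup>2)"
    unfolding net_effect_def gen_err_def weighted_total_def[symmetric] succ curr
    by (rule gen_err_difference_eq[OF assms(3) \<open>0 < N\<close>])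
  also have "weighted_total I D K + real m / D j - 1 / D j * N = weighted_total I D K - total I K / D j"
    by (simp add: N_def add_divide_distrib)
  finally show ?thesis .
qed

lemma eta_minus_eq:
  assumes "0 < total I K" "d * gsq \<noteq> 0"
  defines "T \<equiv> total I K"
  shows "eta d gsq ssq I D K - a
    = net_effect_numerator (a - ssq / (d * gsq)) (weighted_total I D K - a * T) T / T\<^sup>2"
proof -
  have "(2 * T + 1) * S / T\<^sup>2 - (T + 1) * ssq / (d * gsq * T) - a
      = net_effect_numerator (a - ssq / (d * gsq)) (S - a * T) T / T\<^sup>2" if "0 < T" for S T :: real
    using that assms(2) unfolding net_effect_numerator_def
    by (simp add: divide_simps) (simp add: algebra_simps power2_eq_square)
  then show ?thesis
    using assms(1) unfolding eta_def weighted_total_def[symmetric] T_def by simp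
qed

lemma sgn_mult_divide_pos:
  fixes c x y :: real
  assumes "0 < c" "0 < y"
  shows "sgn (c * x / y) = sgn x"
  using assms by (simp add: sgn_mult)

lemma sgn_net_effect:
  fixes m :: nat
  assumes "j \<in> {1..I}" "0 < total I K" "0 < d * gsq"
  shows "sgn (net_effect d gsq ssq I D K j m)
    = sgn (net_effect_numerator (1 / D j - ssq / (d * gsq)) (weighted_total I D K - total I K / D j)
        (total I K + real m))"
proof -
  define N where "N = total I K + real m"
  have "0 < N"
    using assms(2) by (simp add: N_def add_pos_nonneg)
  then show ?thesis
    unfolding net_effect_eq[OF assms(1,2) less_imp_neq[OF assms(3), symmetric]] N_def[symmetric]
    by (intro sgn_mult_divide_pos assms(3)) simp
qed

lemma sgn_eta_minus:
  assumes "0 < total I K" "0 < d * gsq"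
  shows "sgn (eta d gsq ssq I D K - a)
    = sgn (net_effect_numerator (a - ssq / (d * gsq)) (weighted_total I D K - a * total I K) (total I K))"
  using assms(1) unfolding eta_minus_eq[OF assms(1) less_imp_neq[OF assms(2), symmetric]] by simp

theorem theorem2:
  fixes d :: nat and gsq ssq :: real and I j :: nat
    and D :: "nat \<Rightarrow> real" and K :: "nat \<Rightarrow> nat"
  assumes "d \<ge> 1" and "gsq > 0" and "ssq \<ge> 0"
    and "\<forall>i\<in>{1..I}. D i > 0"
    and "(\<Sum>i=1..I. K i) \<ge> 1"
    and "j \<in> {1..I}"
  defines "\<Delta> \<equiv> net_effect (real d) gsq ssq I D K j"
    and "\<eta> \<equiv> eta (real d) gsq ssq I D K"
    and "r \<equiv> ssq / (real d * gsq)"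
  shows "(1 / D j < r \<and> 1 / D j \<le> \<eta> \<longrightarrow>
            \<Delta> 0 \<ge> 0 \<and> (\<exists>M. \<forall>m\<ge>M. \<Delta> m < 0))
       \<and> (r \<le> 1 / D j \<and> 1 / D j \<le> \<eta> \<longrightarrow> (\<forall>m. \<Delta> m \<ge> 0))
       \<and> (\<eta> < 1 / D j \<and> 1 / D j \<le> r \<longrightarrow> (\<forall>m. \<Delta> m < 0))
       \<and> (max r \<eta> < 1 / D j \<longrightarrow>
            \<Delta> 0 < 0 \<and> (\<exists>M. \<forall>m\<ge>M. \<Delta> m > 0))"
proof -
  define T where "T = total I K"
  define p where "p = 1 / D j - r"
  define b where "b = weighted_total I D K - 1 / D j * T"
  have "1 \<le> T"
    using assms(5) by (simp add: T_def total_def flip: of_nat_sum)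
  moreover have "0 < real d * gsq"
    using assms(1,2) by simp
  ultimately have sgn_\<Delta>: "sgn (\<Delta> m) = sgn (net_effect_numerator p b (T + real m))"
    and sgn_\<eta>: "sgn (\<eta> - 1 / D j) = sgn (net_effect_numerator p b T)" for m
    using sgn_net_effect[OF assms(6)] sgn_eta_minus
    unfolding \<Delta>_def \<eta>_def p_def b_def r_def T_def by simp_all
  then have "1 / D j \<le> \<eta> \<longleftrightarrow> 0 \<le> net_effect_numerator p b T"
    "\<eta> < 1 / D j \<longleftrightarrow> net_effect_numerator p b T < 0"
    by (metis diff_ge_0_iff_ge zero_le_sgn_iff sgn_less diff_less_0_iff_less)+
  moreover note net_effect_numerator_sign_pattern[of T \<Delta>, OF _ sgn_\<Delta>]
  ultimately show ?thesis
    using \<open>1 \<le> T\<close> by (auto simp: p_def)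
qed

end
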